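(* Let $A$ be an $n$-by-$n$ doubly nonnegative matrix, written as $A=UDU^T$ with $U=[u_{ij}]$ real orthogonal and $D=\mathrm{diag}(\lambda_1,\dots,\lambda_n)$, $\lambda_1\ge\lambda_2\ge\cdots\ge\lambda_n\ge 0$, and let $W=[w_{ij}]$ be the corresponding sign change matrix. Then every diagonal entry of $W$ is zero, every row and every column of $W$ contains at most one entry equal to $n-1$, and all remaining entries of $W$ are at most $n-2$.
   Context: A real matrix is doubly nonnegative if it is symmetric, positive semidefinite, and entry-wise nonnegative. With $A=UDU^T$ as in the claim and $t>0$, $A^t=UD^tU^T$, so $(A^t)_{ij}=u_{i1}u_{j1}\lambda_1^t+\cdots+u_{in}u_{jn}\lambda_n^t$, an exponential polynomial in $t$. The sign change matrix $W=[w_{ij}]$ is defined by letting $w_{ij}$ be the number of sign changes in the sequence of coefficients $(u_{i1}u_{j1},u_{i2}u_{j2},\dots,u_{in}u_{jn})$ of this exponential polynomial, arranged in decreasing order of the corresponding eigenvalues (zero coefficients being ignored when counting sign changes). *)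

theory Defs
  imports "Jordan_Normal_Form.Matrix"
begin

definition doubly_nonnegative :: "nat \<Rightarrow> real mat \<Rightarrow> bool" where
  "doubly_nonnegative n A \<longleftrightarrow>
     A \<in> carrier_mat n n \<and>
     transpose_mat A = A \<and>
     (\<forall>x \<in> carrier_vec n. 0 \<le> x \<bullet> (A *\<^sub>v x)) \<and>
     (\<forall>i<n. \<forall>j<n. 0 \<le> A $$ (i, j))"

fun sign_changes_nz :: "real list \<Rightarrow> nat" where
  "sign_changes_nz (x # y # zs) = (if x * y < 0 then 1 else 0) + sign_changes_nz (y # zs)"
| "sign_changes_nz _ = 0"

definition sign_changes :: "real list \<Rightarrow> nat" where
  "sign_changes xs = sign_changes_nz (filter (\<lambda>x. x \<noteq> 0) xs)"

text \<open>Sign change matrix (0-based indices): entry (i,j) is the number of sign changes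
  in the coefficient sequence (u_{i0} u_{j0}, ..., u_{i,n-1} u_{j,n-1}), where the columns
  of U are ordered by decreasing eigenvalue.\<close>
definition sign_change_entry :: "nat \<Rightarrow> real mat \<Rightarrow> nat \<Rightarrow> nat \<Rightarrow> nat" where
  "sign_change_entry n U i j = sign_changes (map (\<lambda>k. U $$ (i, k) * U $$ (j, k)) [0..<n])"

end

theory Submission
  imports Defs "Jordan_Normal_Form.Determinant"
begin

text \<open>Only the orthogonality of \<open>U\<close> matters. Diagonal entries count sign changes of squares, hence vanish, and a sequence of
  length \<open>n\<close> has at most \<open>n - 1\<close> sign changes. If \<open>w i j = w i j' = n - 1\<close> with \<open>j \<noteq> j'\<close>,
  then both \<open>k \<mapsto> u_ik u_jk\<close> and \<open>k \<mapsto> u_ik u_j'k\<close> strictly alternate in sign, so their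
  product \<open>u_ik\<^sup>2 u_jk u_j'k\<close> keeps its sign from \<open>k\<close> to \<open>k + 1\<close>. Hence all \<open>u_jk u_j'k\<close> are
  nonzero and of one sign, contradicting the orthogonality of rows \<open>j\<close> and \<open>j'\<close>.\<close>

lemma sign_changes_nz_le_length: "sign_changes_nz xs \<le> length xs - 1"
  by (induction xs rule: sign_changes_nz.induct) auto

lemma sign_changes_nz_nonneg: "\<forall>x\<in>set xs. 0 \<le> x \<Longrightarrow> sign_changes_nz xs = 0"
  by (induction xs rule: sign_changes_nz.induct) (auto simp: zero_le_mult_iff not_less)

lemma sign_changes_nz_maximal_alternates:
  assumes "sign_changes_nz xs = length xs - 1" and "Suc k < length xs"
  shows "xs ! k * xs ! Suc k < 0"
  using assms
proof (induction xs arbitrary: k rule: sign_changes_nz.induct)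
  case (1 x y zs)
  have "sign_changes_nz (y # zs) \<le> length (y # zs) - 1"
    by (rule sign_changes_nz_le_length)
  with "1.prems"(1) have "x * y < 0" and "sign_changes_nz (y # zs) = length (y # zs) - 1"
    by (auto split: if_splits)
  with "1.IH" "1.prems"(2) show ?case
    by (cases k) auto
qed auto

lemma sign_changes_le_length: "sign_changes xs \<le> length xs - 1"
proof -
  have "sign_changes xs \<le> length (filter (\<lambda>x. x \<noteq> 0) xs) - 1"
    unfolding sign_changes_def by (rule sign_changes_nz_le_length)
  also have "\<dots> \<le> length xs - 1"
    by (simp add: diff_le_mono)
  finally show ?thesis .
qed

lemma sign_changes_nonneg: "\<forall>x\<in>set xs. 0 \<le> x \<Longrightarrow> sign_changes xs = 0"
  unfolding sign_changes_def by (rule sign_changes_nz_nonneg) auto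

lemma sign_changes_maximal_alternates:
  assumes max: "sign_changes xs = length xs - 1" and k: "Suc k < length xs"
  shows "xs ! k * xs ! Suc k < 0"
proof -
  let ?nz = "filter (\<lambda>x. x \<noteq> 0) xs"
  have "?nz = xs"
  proof (rule ccontr)
    assume "?nz \<noteq> xs"
    then have "length ?nz < length xs"
      by (metis filter_id_conv length_filter_less)
    with k have "length ?nz - 1 < length xs - 1"
      by linarith
    moreover have "sign_changes xs \<le> length ?nz - 1"
      unfolding sign_changes_def by (rule sign_changes_nz_le_length)
    ultimately show False
      using max by linarith
  qed
  with max have "sign_changes_nz xs = length xs - 1"
    unfolding sign_changes_def by simp
  from this k show ?thesis
    by (rule sign_changes_nz_maximal_alternates)
qed

lemma sum_ne_zero_if_adjacent_products_pos:
  fixes r :: "nat \<Rightarrow> real"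
  assumes "0 < n" and "r 0 \<noteq> 0" and adj: "\<And>k. Suc k < n \<Longrightarrow> 0 < r k * r (Suc k)"
  shows "(\<Sum>k<n. r k) \<noteq> 0"
proof -
  have same_sign: "0 < r 0 * r k" if "k < n" for k
    using that
  proof (induction k)
    case 0
    from \<open>r 0 \<noteq> 0\<close> show ?case
      by (auto simp: zero_less_mult_iff linorder_neq_iff)
  next
    case (Suc k)
    with adj[of k] show ?case
      by (auto simp: zero_less_mult_iff)
  qed
  have "0 < (\<Sum>k<n. r 0 * r k)"
    using \<open>0 < n\<close> same_sign by (intro sum_pos) auto
  then show ?thesis
    by (auto simp: sum_distrib_left[symmetric])
qed

lemma sign_change_entry_sym: "sign_change_entry n U i j = sign_change_entry n U j i"
  unfolding sign_change_entry_def by (simp add: mult.commute)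

lemma sign_change_entry_diag: "sign_change_entry n U i i = 0"
  unfolding sign_change_entry_def by (rule sign_changes_nonneg) auto

lemma sign_change_entry_le: "sign_change_entry n U i j \<le> n - 1"
  using sign_changes_le_length[of "map (\<lambda>k. U $$ (i, k) * U $$ (j, k)) [0..<n]"]
  by (simp add: sign_change_entry_def)

lemma sign_change_entry_maximal_alternates:
  assumes "sign_change_entry n U i j = n - 1" and "Suc k < n"
  shows "(U $$ (i, k) * U $$ (j, k)) * (U $$ (i, Suc k) * U $$ (j, Suc k)) < 0"
  using sign_changes_maximal_alternates[of "map (\<lambda>k. U $$ (i, k) * U $$ (j, k)) [0..<n]" k] assms
  by (simp add: sign_change_entry_def del: upt_Suc)

lemma orthogonal_rows:
  fixes U :: "'a :: comm_ring_1 mat"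
  assumes "U \<in> carrier_mat n n" and "U * transpose_mat U = 1\<^sub>m n"
    and "j < n" and "j' < n" and "j \<noteq> j'"
  shows "(\<Sum>k<n. U $$ (j, k) * U $$ (j', k)) = 0"
proof -
  have "(\<Sum>k<n. U $$ (j, k) * U $$ (j', k)) = (U * transpose_mat U) $$ (j, j')"
    using assms(1,3,4) by (simp add: scalar_prod_def lessThan_atLeast0)
  also have "\<dots> = 0"
    unfolding assms(2) using assms(3-5) by simp
  finally show ?thesis .
qed

lemma sign_change_entry_maximal_unique:
  fixes U :: "real mat"
  assumes U: "U \<in> carrier_mat n n" "U * transpose_mat U = 1\<^sub>m n"
    and j: "j < n" "j' < n" "j \<noteq> j'"
    and max: "sign_change_entry n U i j = n - 1" "sign_change_entry n U i j' = n - 1"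
  shows False
proof -
  define r where "r k = U $$ (j, k) * U $$ (j', k)" for k
  have adj: "0 < r k * r (Suc k)" if k: "Suc k < n" for k
  proof -
    have "0 < ((U $$ (i, k) * U $$ (j, k)) * (U $$ (i, Suc k) * U $$ (j, Suc k)))
            * ((U $$ (i, k) * U $$ (j', k)) * (U $$ (i, Suc k) * U $$ (j', Suc k)))"
      using sign_change_entry_maximal_alternates[OF max(1) k]
        sign_change_entry_maximal_alternates[OF max(2) k] by (rule mult_neg_neg)
    also have "\<dots> = (U $$ (i, k) * U $$ (i, Suc k))\<^sup>2 * (r k * r (Suc k))"
      unfolding r_def by (simp add: power2_eq_square algebra_simps)
    finally show ?thesis
      by (simp add: zero_less_mult_iff)
  qed
  from j have "Suc 0 < n"
    by linarith
  from adj[OF this] have "r 0 \<noteq> 0"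
    by auto
  with j adj have "(\<Sum>k<n. r k) \<noteq> 0"
    by (intro sum_ne_zero_if_adjacent_products_pos) auto
  with orthogonal_rows[OF U j] show False
    by (simp add: r_def)
qed

lemma card_maximal_sign_change_entries_le_1:
  fixes U :: "real mat"
  assumes "U \<in> carrier_mat n n" and "U * transpose_mat U = 1\<^sub>m n"
  shows "card {j. j < n \<and> sign_change_entry n U i j = n - 1} \<le> 1"
proof -
  have "card {j. j < n \<and> sign_change_entry n U i j = n - 1} \<le> Suc 0"
    using sign_change_entry_maximal_unique[OF assms] by (subst card_le_Suc0_iff_eq) auto
  then show ?thesis
    by simp
qed

theorem lemma2p3:
  fixes n :: nat and A U :: "real mat" and lam :: "nat \<Rightarrow> real"
  assumes "doubly_nonnegative n A"
    and "U \<in> carrier_mat n n"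
    and "transpose_mat U * U = 1\<^sub>m n"
    and "\<And>k l. k \<le> l \<Longrightarrow> l < n \<Longrightarrow> lam l \<le> lam k"
    and "\<And>k. k < n \<Longrightarrow> 0 \<le> lam k"
    and "A = U * mat_diag n lam * transpose_mat U"
  defines "w \<equiv> sign_change_entry n U"
  shows "(\<forall>i<n. w i i = 0)
    \<and> (\<forall>i<n. card {j. j < n \<and> w i j = n - 1} \<le> 1)
    \<and> (\<forall>j<n. card {i. i < n \<and> w i j = n - 1} \<le> 1)
    \<and> (\<forall>i<n. \<forall>j<n. w i j \<noteq> n - 1 \<longrightarrow> w i j \<le> n - 2)"
proof (intro conjI allI impI)
  have "U * transpose_mat U = 1\<^sub>m n"
    by (rule mat_mult_left_right_inverse[OF _ assms(2,3)]) (use assms(2) in simp)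
  with assms(2) show rows: "card {j. j < n \<and> w i j = n - 1} \<le> 1" for i
    unfolding w_def by (rule card_maximal_sign_change_entries_le_1)
  show "card {i. i < n \<and> w i j = n - 1} \<le> 1" for j
    using rows[of j] by (simp add: w_def sign_change_entry_sym)
  show "w i i = 0" for i
    unfolding w_def by (rule sign_change_entry_diag)
  show "w i j \<le> n - 2" if "w i j \<noteq> n - 1" for i j
    using that sign_change_entry_le[of n U i j] unfolding w_def by linarith
qed

end
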